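(* Let $G$ be a $(P_5,\text{chair})$-free graph and let $C=v_1v_2v_3v_4v_5v_1$ be an induced $C_5$ in $G$. Let $1\le i\le 5$, let $u,v\in S_4(i)$ with $uv\notin E(G)$, and let $s\in S^1_3(i)\cup S_4(i+2)\cup S_4(i-2)$. Then $s$ is either adjacent to both $u$ and $v$ or to neither.
   Context: All graphs are finite and simple; $P_5$ is the path on 5 vertices; the chair is a $P_4$ plus a vertex adjacent to exactly one of the two middle vertices of the $P_4$; "$H$-free" means no induced subgraph isomorphic to $H$. Indices modulo 5; for $v\notin V(C)$ let $N_C(v)=N(v)\cap V(C)$. $S^1_3(j)=\{v\notin V(C): N_C(v)=\{v_{j-1},v_j,v_{j+1}\}\}$, $S_4(j)=\{v\notin V(C): N_C(v)=\{v_{j-2},v_{j-1},v_{j+1},v_{j+2}\}\}$. *)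

theory Defs
  imports Main
begin

definition simple_graph :: "'a set \<Rightarrow> ('a \<Rightarrow> 'a \<Rightarrow> bool) \<Rightarrow> bool" where
  "simple_graph V E \<longleftrightarrow> finite V \<and> (\<forall>x y. E x y \<longrightarrow> x \<in> V \<and> y \<in> V)
     \<and> (\<forall>x y. E x y \<longrightarrow> E y x) \<and> (\<forall>x. \<not> E x x)"

definition has_induced :: "'a set \<Rightarrow> ('a \<Rightarrow> 'a \<Rightarrow> bool) \<Rightarrow> 'b set \<Rightarrow> ('b \<Rightarrow> 'b \<Rightarrow> bool) \<Rightarrow> bool" where
  "has_induced V E VH EH \<longleftrightarrow> (\<exists>f. inj_on f VH \<and> f ` VH \<subseteq> V \<and>
      (\<forall>x\<in>VH. \<forall>y\<in>VH. E (f x) (f y) \<longleftrightarrow> EH x y))"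

definition P5_adj :: "nat \<Rightarrow> nat \<Rightarrow> bool" where
  "P5_adj x y \<longleftrightarrow> x + 1 = y \<or> y + 1 = x"

definition chair_adj :: "nat \<Rightarrow> nat \<Rightarrow> bool" where
  "chair_adj x y \<longleftrightarrow> (x < 4 \<and> y < 4 \<and> (x + 1 = y \<or> y + 1 = x))
     \<or> {x, y} = {1, 4}"

definition P5_chair_free :: "'a set \<Rightarrow> ('a \<Rightarrow> 'a \<Rightarrow> bool) \<Rightarrow> bool" where
  "P5_chair_free V E \<longleftrightarrow> \<not> has_induced V E {0..<5::nat} P5_adj
     \<and> \<not> has_induced V E {0..<5::nat} chair_adj"

definition induced_C5 :: "'a set \<Rightarrow> ('a \<Rightarrow> 'a \<Rightarrow> bool) \<Rightarrow> (nat \<Rightarrow> 'a) \<Rightarrow> bool" where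
  "induced_C5 V E v \<longleftrightarrow> inj_on v {0..<5} \<and> v ` {0..<5} \<subseteq> V \<and>
     (\<forall>i<5. \<forall>j<5. E (v i) (v j) \<longleftrightarrow> (j = (i + 1) mod 5 \<or> i = (j + 1) mod 5))"

definition cv :: "(nat \<Rightarrow> 'a) \<Rightarrow> int \<Rightarrow> 'a" where
  "cv v i = v (nat (i mod 5))"

definition NC :: "('a \<Rightarrow> 'a \<Rightarrow> bool) \<Rightarrow> (nat \<Rightarrow> 'a) \<Rightarrow> 'a \<Rightarrow> 'a set" where
  "NC E v x = {y \<in> v ` {0..<5}. E x y}"

definition S13 :: "'a set \<Rightarrow> ('a \<Rightarrow> 'a \<Rightarrow> bool) \<Rightarrow> (nat \<Rightarrow> 'a) \<Rightarrow> int \<Rightarrow> 'a set" where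
  "S13 V E v j = {x \<in> V. x \<notin> v ` {0..<5} \<and>
      NC E v x = {cv v (j - 1), cv v j, cv v (j + 1)}}"

definition S4 :: "'a set \<Rightarrow> ('a \<Rightarrow> 'a \<Rightarrow> bool) \<Rightarrow> (nat \<Rightarrow> 'a) \<Rightarrow> int \<Rightarrow> 'a set" where
  "S4 V E v j = {x \<in> V. x \<notin> v ` {0..<5} \<and>
      NC E v x = {cv v (j - 2), cv v (j - 1), cv v (j + 1), cv v (j + 2)}}"

end

theory Submission
  imports Defs
begin

text \<open>
  A vertex of \<open>S\<^sub>4(i)\<close> sees \<open>v\<^sub>i\<^sub>\<plusminus>\<^sub>2\<close> but not \<open>v\<^sub>i\<close>, while \<open>s\<close> sees \<open>v\<^sub>i\<close> and misses one of \<open>v\<^sub>i\<^sub>\<plusminus>\<^sub>2\<close>,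
  say \<open>c\<close>. If \<open>s\<close> saw \<open>u\<close> but not \<open>w\<close>, then \<open>w c u s v\<^sub>i\<close> would be an induced \<open>P\<^sub>5\<close>.
\<close>

lemma simple_graph_sym: "simple_graph V E \<Longrightarrow> E x y \<Longrightarrow> E y x"
  unfolding simple_graph_def by blast

lemma simple_graph_irrefl: "simple_graph V E \<Longrightarrow> \<not> E x x"
  unfolding simple_graph_def by blast

lemma has_induced_P5I:
  assumes "simple_graph V E" "a \<in> V" "b \<in> V" "c \<in> V" "d \<in> V" "e \<in> V"
    and "E a b" "E b c" "E c d" "E d e"
    and "\<not> E a c" "\<not> E a d" "\<not> E a e" "\<not> E b d" "\<not> E b e" "\<not> E c e"
  shows "has_induced V E {0..<5::nat} P5_adj"
proof -
  note irrefl = simple_graph_irrefl[OF assms(1)] and sym = simple_graph_sym[OF assms(1)]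
  have distinct: "a \<noteq> b" "a \<noteq> c" "a \<noteq> d" "a \<noteq> e" "b \<noteq> c" "b \<noteq> d" "b \<noteq> e"
      "c \<noteq> d" "c \<noteq> e" "d \<noteq> e"
    using assms irrefl sym by metis+
  define f where "f = (\<lambda>n::nat. [a, b, c, d, e] ! n)"
  have five: "{0..<5::nat} = {0, 1, 2, 3, 4}" by auto
  have "inj_on f {0..<5}" unfolding five f_def using distinct by (auto simp: inj_on_def)
  moreover have "f ` {0..<5} \<subseteq> V" unfolding five f_def using assms by auto
  moreover have "\<forall>x\<in>{0..<5}. \<forall>y\<in>{0..<5}. E (f x) (f y) \<longleftrightarrow> P5_adj x y"
    unfolding five f_def P5_adj_def using assms irrefl sym by auto
  ultimately show ?thesis unfolding has_induced_def by blast
qed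

lemma P5_free_adj_iff:
  assumes "simple_graph V E" "\<not> has_induced V E {0..<5::nat} P5_adj"
    and "a \<in> V" "c \<in> V" "u \<in> V" "w \<in> V" "s \<in> V"
    and "E u c" "E w c" "\<not> E u a" "\<not> E w a" "\<not> E c a" "E s a" "\<not> E s c" "\<not> E u w"
  shows "E s u \<longleftrightarrow> E s w"
proof -
  note sym = simple_graph_sym[OF assms(1)]
  have "E s x"
    if "E s y" "x \<in> V" "y \<in> V" "E x c" "E y c" "\<not> E x a" "\<not> E y a" "\<not> E x y" for x y
  proof (rule ccontr)
    assume "\<not> E s x"
    then have "has_induced V E {0..<5::nat} P5_adj"
      by (intro has_induced_P5I[of V E x c y s a]) (use assms that sym in metis)+
    with assms(2) show False ..
  qed
  from this[of u w] this[of w u] show ?thesis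
    using assms sym by blast
qed

lemma induced_C5D:
  assumes "induced_C5 V E v"
  shows "inj_on v {0..<5}" "v ` {0..<5} \<subseteq> V"
    and "\<forall>i<5. \<forall>j<5. E (v i) (v j) \<longleftrightarrow> (j = (i + 1) mod 5 \<or> i = (j + 1) mod 5)"
proof -
  note C5 = assms[unfolded induced_C5_def]
  show "inj_on v {0..<5}" using C5 by (rule conjunct1)
  show "v ` {0..<5} \<subseteq> V" using C5[THEN conjunct2] by (rule conjunct1)
  show "\<forall>i<5. \<forall>j<5. E (v i) (v j) \<longleftrightarrow> (j = (i + 1) mod 5 \<or> i = (j + 1) mod 5)"
    using C5[THEN conjunct2] by (rule conjunct2)
qed

lemma nat_mod5_less: "nat (k mod 5) < 5"
  by simp

lemma cv_in_cycle: "cv v k \<in> v ` {0..<5}"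
  unfolding cv_def using nat_mod5_less by simp

lemma cv_in_V: "induced_C5 V E v \<Longrightarrow> cv v k \<in> V"
  using induced_C5D(2) cv_in_cycle by (rule subsetD)

lemma adj_cv_iff_in_NC: "E x (cv v k) \<longleftrightarrow> cv v k \<in> NC E v x"
  by (simp add: NC_def cv_in_cycle)

lemma cv_eq_iff:
  assumes "induced_C5 V E v"
  shows "cv v k = cv v l \<longleftrightarrow> k mod 5 = l mod 5"
proof -
  from induced_C5D(1)[OF assms] have "v (nat (k mod 5)) = v (nat (l mod 5)) \<longleftrightarrow> nat (k mod 5) = nat (l mod 5)"
    using nat_mod5_less by (simp add: inj_on_eq_iff)
  then show ?thesis unfolding cv_def by (simp add: eq_nat_nat_iff)
qed

lemma cv_adj_iff:
  assumes "induced_C5 V E v"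
  shows "E (cv v k) (cv v l) \<longleftrightarrow> (l - k) mod 5 \<in> {1, 4}"
proof -
  define i j where "i = nat (k mod 5)" and "j = nat (l mod 5)"
  have ij: "k mod 5 = int i" "l mod 5 = int j" "i < 5" "j < 5"
    unfolding i_def j_def by simp_all
  have "cv v k = v i" "cv v l = v j"
    unfolding cv_def i_def j_def by simp_all
  then have "E (cv v k) (cv v l) \<longleftrightarrow> (j = (i + 1) mod 5 \<or> i = (j + 1) mod 5)"
    using induced_C5D(3)[OF assms, rule_format, OF ij(3,4)] by simp
  moreover have "(l - k) mod 5 = (int j - int i) mod 5"
    using ij(1,2) by (metis mod_diff_eq)
  moreover have "(j = (i + 1) mod 5 \<or> i = (j + 1) mod 5) \<longleftrightarrow> (int j - int i) mod 5 \<in> {1, 4}"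
  proof -
    have "i \<in> {0, 1, 2, 3, 4}" "j \<in> {0, 1, 2, 3, 4}"
      using ij(3,4) by auto
    then show ?thesis by (elim insertE emptyE) simp_all
  qed
  ultimately show ?thesis by simp
qed

lemma mod_eq_shift_iff:
  fixes a b t m :: int
  shows "a mod m = (b + t) mod m \<longleftrightarrow> (a - b) mod m = t mod m"
  by (simp add: mod_eq_dvd_iff algebra_simps)

lemma S4_adj_cv_iff:
  assumes "induced_C5 V E v" "x \<in> S4 V E v j"
  shows "E x (cv v k) \<longleftrightarrow> (k - j) mod 5 \<noteq> 0"
proof -
  have "NC E v x = {cv v (j - 2), cv v (j - 1), cv v (j + 1), cv v (j + 2)}"
    using assms(2) unfolding S4_def by simp
  then have "E x (cv v k) \<longleftrightarrow> cv v k \<in> {cv v (j - 2), cv v (j - 1), cv v (j + 1), cv v (j + 2)}"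
    by (simp only: adj_cv_iff_in_NC)
  also have "\<dots> \<longleftrightarrow> (k - j) mod 5 \<noteq> 0"
  proof -
    have "(k - j) mod 5 \<in> {0, 1, 2, 3, 4}" by auto
    then show ?thesis
      using mod_eq_shift_iff[of k 5 j]
      by (auto simp: cv_eq_iff[OF assms(1)] diff_conv_add_uminus simp del: add_uminus_conv_diff)
  qed
  finally show ?thesis .
qed

lemma S13_adj_cv_iff:
  assumes "induced_C5 V E v" "x \<in> S13 V E v j"
  shows "E x (cv v k) \<longleftrightarrow> (k - j) mod 5 \<in> {0, 1, 4}"
proof -
  have "NC E v x = {cv v (j - 1), cv v j, cv v (j + 1)}"
    using assms(2) unfolding S13_def by simp
  then have "E x (cv v k) \<longleftrightarrow> cv v k \<in> {cv v (j - 1), cv v j, cv v (j + 1)}"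
    by (simp only: adj_cv_iff_in_NC)
  also have "\<dots> \<longleftrightarrow> (k - j) mod 5 \<in> {0, 1, 4}"
  proof -
    have "(k - j) mod 5 \<in> {0, 1, 2, 3, 4}" by auto
    then show ?thesis
      using mod_eq_shift_iff[of k 5 j] mod_eq_dvd_iff[of k 5 j]
      by (auto simp: cv_eq_iff[OF assms(1)] diff_conv_add_uminus simp del: add_uminus_conv_diff)
  qed
  finally show ?thesis .
qed

lemma adj_cv_and_nonadj_far_cv:
  assumes "induced_C5 V E v" "s \<in> S13 V E v i \<union> S4 V E v (i + 2) \<union> S4 V E v (i - 2)"
  obtains c where "(c - i) mod 5 \<in> {2, 3}" "E s (cv v i)" "\<not> E s (cv v c)"
proof -
  consider "s \<in> S13 V E v i" | "s \<in> S4 V E v (i + 2)" | "s \<in> S4 V E v (i - 2)"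
    using assms(2) by blast
  then show thesis
  proof cases
    case 1
    show thesis using that[of "i + 2"] by (simp add: S13_adj_cv_iff[OF assms(1) 1])
  next
    case 2
    show thesis using that[of "i + 2"] by (simp add: S4_adj_cv_iff[OF assms(1) 2])
  next
    case 3
    show thesis using that[of "i - 2"] by (simp add: S4_adj_cv_iff[OF assms(1) 3])
  qed
qed

text \<open>Cycle indices are read modulo 5, so the bounds \<open>1 \<le> i \<le> 5\<close> are not needed.\<close>

theorem mainTheorem10:
  fixes V :: "'a set" and E :: "'a \<Rightarrow> 'a \<Rightarrow> bool" and v :: "nat \<Rightarrow> 'a"
    and i :: int and u w s :: 'a
  assumes "simple_graph V E"
    and "P5_chair_free V E"
    and "induced_C5 V E v"
    and "1 \<le> i" and "i \<le> 5"
    and "u \<in> S4 V E v i" and "w \<in> S4 V E v i" and "\<not> E u w"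
    and "s \<in> S13 V E v i \<union> S4 V E v (i + 2) \<union> S4 V E v (i - 2)"
  shows "(E s u \<and> E s w) \<or> (\<not> E s u \<and> \<not> E s w)"
proof -
  note C5 = assms(3)
  obtain c where c: "(c - i) mod 5 \<in> {2, 3}" "E s (cv v i)" "\<not> E s (cv v c)"
    using adj_cv_and_nonadj_far_cv[OF C5 assms(9)] .
  have adj_c: "E u (cv v c)" "E w (cv v c)" and nonadj_i: "\<not> E u (cv v i)" "\<not> E w (cv v i)"
    using c(1) S4_adj_cv_iff[OF C5 assms(6)] S4_adj_cv_iff[OF C5 assms(7)] by auto
  have "\<not> E (cv v c) (cv v i)"
    using c(1) cv_adj_iff[OF C5, of i c] simple_graph_sym[OF assms(1)] by auto
  moreover have "u \<in> V" "w \<in> V" "s \<in> V"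
    using assms(6,7,9) unfolding S4_def S13_def by auto
  moreover have "\<not> has_induced V E {0..<5::nat} P5_adj"
    using assms(2) unfolding P5_chair_free_def by blast
  ultimately have "E s u \<longleftrightarrow> E s w"
    using P5_free_adj_iff[OF assms(1) _ cv_in_V[OF C5] cv_in_V[OF C5] _ _ _ adj_c nonadj_i _ c(2,3) assms(8)]
    by blast
  then show ?thesis by blast
qed

end
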